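(* Let $\pi,\tau\in\mathfrak{S}_m$. If $\pi$ and $\tau$ are strongly c-Wilf equivalent, then $\mathcal{O}_\pi=\mathcal{O}_\tau$.
   Context: $\mathfrak{S}_n$ is the symmetric group on $[n]$. The standardization $\operatorname{st}(w)$ of a word of distinct integers replaces its smallest entry by 1, the next smallest by 2, etc. For $\pi\in\mathfrak{S}_m$ and $\sigma\in\mathfrak{S}_n$, $\operatorname{Em}(\pi,\sigma)=\{i\in[n-m+1]:\operatorname{st}(\sigma_i\cdots\sigma_{i+m-1})=\pi\}$. Let $a^\pi_{n,k}$ be the number of $\sigma\in\mathfrak{S}_n$ with $|\operatorname{Em}(\pi,\sigma)|=k$; $\pi$ and $\tau$ are strongly c-Wilf equivalent if $a^\pi_{n,k}=a^\tau_{n,k}$ for all $n,k$. The overlap set is $\mathcal{O}_\pi=\{i\in[m-1]:\operatorname{st}(\pi_{i+1}\cdots\pi_m)=\operatorname{st}(\pi_1\cdots\pi_{m-i})\}$. *)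

theory Defs
  imports Main
begin

(* Permutations of [n] are represented in one-line notation as lists of naturals. *)
definition perms :: "nat \<Rightarrow> nat list set" where
  "perms n = {w. distinct w \<and> set w = {1..n}}"

definition st :: "nat list \<Rightarrow> nat list" where
  "st w = map (\<lambda>x. card {y \<in> set w. y \<le> x}) w"

(* Em(pi, sigma): positions i in [n-m+1] (1-indexed) where the consecutive
   factor sigma_i ... sigma_{i+m-1} standardizes to pi. *)
definition Em :: "nat list \<Rightarrow> nat list \<Rightarrow> nat set" where
  "Em p s = {i. 1 \<le> i \<and> i + length p \<le> length s + 1 \<and>
                st (take (length p) (drop (i - 1) s)) = p}"

definition a_num :: "nat list \<Rightarrow> nat \<Rightarrow> nat \<Rightarrow> nat" where
  "a_num p n k = card {s \<in> perms n. card (Em p s) = k}"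

definition strongly_cwilf_equiv :: "nat list \<Rightarrow> nat list \<Rightarrow> bool" where
  "strongly_cwilf_equiv p t \<longleftrightarrow> (\<forall>n k. a_num p n k = a_num t n k)"

definition overlaps :: "nat list \<Rightarrow> nat set" where
  "overlaps p = {i \<in> {1..length p - 1}.
                   st (drop i p) = st (take (length p - i) p)}"

end

theory Submission
  imports Defs
begin

text \<open>Counting pairs of occurrences of \<open>\<pi>\<close> gives \<open>\<Sum>\<^sub>k (k choose 2) a\<^sup>\<pi>\<^sub>n\<^sub>,\<^sub>k\<close>, which is therefore
  the same for \<open>\<pi>\<close> and \<open>\<tau>\<close>. Sorting the pairs by their gap \<open>d\<close>, for \<open>n = m + e\<close> this count is
  \<open>\<Sum>\<^sub>d\<^sub>\<le>\<^sub>e |Q\<^sub>\<pi>(d)| c(m,e,d)\<close>, where \<open>Q\<^sub>\<pi>(d)\<close> is the set of permutations of length \<open>m + d\<close>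
  starting and ending with an occurrence of \<open>\<pi>\<close>, and \<open>c(m,e,d)\<close> does not depend on \<open>\<pi>\<close> and is
  positive for \<open>d = e\<close>. Induction on \<open>e\<close> gives \<open>|Q\<^sub>\<pi>(d)| = |Q\<^sub>\<tau>(d)|\<close> for all \<open>d\<close>, and for
  \<open>d < m\<close> the set \<open>Q\<^sub>\<pi>(d)\<close> is nonempty exactly when \<open>d \<in> \<O>\<^sub>\<pi>\<close>.\<close>

definition rank :: "nat list \<Rightarrow> nat \<Rightarrow> nat" where
  "rank w x = card {y \<in> set w. y \<le> x}"

lemma st_eq_map_rank: "st w = map (rank w) w"
  by (simp add: st_def rank_def)

lemma length_st [simp]: "length (st w) = length w"
  by (simp add: st_def)

lemma nth_st: "i < length w \<Longrightarrow> st w ! i = rank w (w ! i)"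
  by (simp add: st_eq_map_rank)

lemma rank_strict_mono_on: "strict_mono_on (set w) (rank w)"
proof (rule strict_mono_onI)
  fix x y assume "x \<in> set w" "y \<in> set w" "x < y"
  then have "{z \<in> set w. z \<le> x} \<subset> {z \<in> set w. z \<le> y}" by force
  then show "rank w x < rank w y" unfolding rank_def by (simp add: psubset_card_mono)
qed

lemma st_map_strict_mono:
  assumes "strict_mono_on (set w) f"
  shows "st (map f w) = st w"
proof -
  have inj: "inj_on f (set w)" using assms strict_mono_on_imp_inj_on by blast
  have "card {y \<in> f ` set w. y \<le> f x} = card {y \<in> set w. y \<le> x}" if "x \<in> set w" for x
  proof -
    have "{y \<in> f ` set w. y \<le> f x} = f ` {y \<in> set w. y \<le> x}"
      using strict_mono_on_less_eq[OF assms _ that] by auto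
    moreover have "inj_on f {y \<in> set w. y \<le> x}" using inj by (rule inj_on_subset) auto
    ultimately show ?thesis by (simp add: card_image)
  qed
  then show ?thesis by (simp add: st_def)
qed

lemma st_map_rank: "set u \<subseteq> set w \<Longrightarrow> st (map (rank w) u) = st u"
  by (rule st_map_strict_mono) (meson rank_strict_mono_on monotone_on_subset)

lemma st_take_drop_st: "st (take k (drop j (st w))) = st (take k (drop j w))"
proof -
  have "take k (drop j (st w)) = map (rank w) (take k (drop j w))"
    by (simp add: st_eq_map_rank drop_map take_map)
  moreover have "set (take k (drop j w)) \<subseteq> set w"
    by (meson order_trans set_drop_subset set_take_subset)
  ultimately show ?thesis by (metis st_map_rank)
qed

lemma st_take_st: "st (take k (st w)) = st (take k w)"
  using st_take_drop_st[of k 0 w] by simp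

lemma st_drop_st: "st (drop j (st w)) = st (drop j w)"
  using st_take_drop_st[of "length w" j w] by simp

lemma nth_st_less_iff:
  "i < length w \<Longrightarrow> j < length w \<Longrightarrow> st w ! i < st w ! j \<longleftrightarrow> w ! i < w ! j"
  by (simp add: nth_st strict_mono_on_less[OF rank_strict_mono_on])

lemma st_eq_imp_less_iff:
  assumes "st u = st v" "i < length u" "j < length u"
  shows "u ! i < u ! j \<longleftrightarrow> v ! i < v ! j"
proof -
  have "length v = length u" using arg_cong[OF assms(1), of length] by simp
  then show ?thesis using assms nth_st_less_iff[of i u j] nth_st_less_iff[of i v j] by simp
qed

lemma perms_length: "p \<in> perms n \<Longrightarrow> length p = n"
  unfolding perms_def using distinct_card by fastforce

lemma perms_distinct: "p \<in> perms n \<Longrightarrow> distinct p"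
  by (simp add: perms_def)

lemma perms_nth: "p \<in> perms n \<Longrightarrow> i < n \<Longrightarrow> p ! i \<in> {1..n}"
  using nth_mem[of i p] perms_length[of p n] by (simp add: perms_def)

lemma finite_perms: "finite (perms n)"
proof (rule finite_subset)
  show "perms n \<subseteq> {xs. set xs \<subseteq> {1..n} \<and> length xs = n}"
    by (auto simp: perms_length) (auto simp: perms_def)
qed (rule finite_lists_length_eq, simp)

lemma st_in_perms:
  assumes "distinct w"
  shows "st w \<in> perms (length w)"
proof -
  have inj: "inj_on (rank w) (set w)" using rank_strict_mono_on strict_mono_on_imp_inj_on by blast
  have "rank w x \<in> {1..length w}" if x: "x \<in> set w" for x
  proof -
    have "0 < rank w x" unfolding rank_def using x by (subst card_gt_0_iff) auto
    moreover have "rank w x \<le> card (set w)" unfolding rank_def by (rule card_mono) auto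
    ultimately show ?thesis using distinct_card[OF assms] by simp
  qed
  moreover have "card (rank w ` set w) = length w"
    using card_image[OF inj] distinct_card[OF assms] by simp
  ultimately have "rank w ` set w = {1..length w}" by (intro card_subset_eq) auto
  moreover have "distinct (st w)" using assms inj by (simp add: st_eq_map_rank distinct_map)
  ultimately show ?thesis by (simp add: perms_def st_eq_map_rank)
qed

lemma card_filter_set_conv_nth:
  assumes "distinct u"
  shows "card {y \<in> set u. P y} = card {k. k < length u \<and> P (u ! k)}"
proof -
  have "{y \<in> set u. P y} = (\<lambda>k. u ! k) ` {k. k < length u \<and> P (u ! k)}"
    by (auto simp: in_set_conv_nth)
  moreover have "inj_on (\<lambda>k. u ! k) {k. k < length u \<and> P (u ! k)}"
    using assms by (auto simp: inj_on_def nth_eq_iff_index_eq)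
  ultimately show ?thesis by (simp add: card_image)
qed

lemma st_eqI:
  assumes p: "p \<in> perms (length u)"
    and mono: "\<And>i j. i < length u \<Longrightarrow> j < length u \<Longrightarrow> p ! i < p ! j \<Longrightarrow> u ! i < u ! j"
  shows "st u = p"
proof -
  have lp: "length p = length u" and dp: "distinct p" using p perms_length perms_distinct by auto
  have iff: "u ! i < u ! j \<longleftrightarrow> p ! i < p ! j" if "i < length u" "j < length u" for i j
  proof
    assume "u ! i < u ! j"
    then have "p ! i \<noteq> p ! j" using dp that lp by (auto simp: nth_eq_iff_index_eq)
    then show "p ! i < p ! j" using mono[OF that(2,1)] \<open>u ! i < u ! j\<close> by fastforce
  qed (rule mono[OF that])
  have du: "distinct u"
  proof (subst distinct_conv_nth, intro allI impI)
    fix i j assume ij: "i < length u" "j < length u" "i \<noteq> j"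
    then have "p ! i \<noteq> p ! j" using dp lp by (simp add: nth_eq_iff_index_eq)
    then show "u ! i \<noteq> u ! j" using iff ij by (metis linorder_neqE_nat less_irrefl)
  qed
  show ?thesis
  proof (rule nth_equalityI)
    show "length (st u) = length p" using lp by simp
    fix i assume "i < length (st u)"
    then have i: "i < length u" by simp
    have "st u ! i = card {k. k < length u \<and> u ! k \<le> u ! i}"
      using i by (simp add: nth_st rank_def card_filter_set_conv_nth[OF du])
    also have "\<dots> = card {k. k < length u \<and> p ! k \<le> p ! i}"
      using iff i by (metis not_le)
    also have "\<dots> = card {y \<in> set p. y \<le> p ! i}"
      using card_filter_set_conv_nth[OF dp] lp by simp
    also have "{y \<in> set p. y \<le> p ! i} = {1..p ! i}"
      using p perms_nth[OF p] i by (auto simp: perms_def intro: order_trans)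
    finally show "st u ! i = p ! i" by simp
  qed
qed

definition window :: "nat \<Rightarrow> nat \<Rightarrow> nat list \<Rightarrow> nat list" where
  "window j L s = take L (drop j s)"

definition replace_window :: "nat \<Rightarrow> nat \<Rightarrow> nat list \<Rightarrow> nat list \<Rightarrow> nat list" where
  "replace_window j L s w = take j s @ w @ drop (j + L) s"

lemma window_replace_window:
  "j + L \<le> length s \<Longrightarrow> length w = L \<Longrightarrow> window j L (replace_window j L s w) = w"
  by (simp add: window_def replace_window_def)

lemma replace_window_replace_window:
  "j + L \<le> length s \<Longrightarrow> length w = L \<Longrightarrow>
    replace_window j L (replace_window j L s w) w' = replace_window j L s w'"
  by (simp add: replace_window_def)

lemma replace_window_window: "replace_window j L s (window j L s) = s"
  by (simp add: replace_window_def window_def) (metis add.commute append_take_drop_id drop_drop)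

lemma window_of_perm:
  assumes "s \<in> perms n" "j + L \<le> n"
  shows "distinct (window j L s)" "length (window j L s) = L"
  using assms by (simp_all add: window_def perms_distinct perms_length)

lemma replace_window_in_perms:
  assumes s: "s \<in> perms n" and "distinct w" and "set w = set (window j L s)"
  shows "replace_window j L s w \<in> perms n"
proof -
  have "distinct (replace_window j L s (window j L s))"
    using s by (simp add: replace_window_window perms_def)
  then have "distinct (replace_window j L s w)" using assms by (simp add: replace_window_def)
  moreover have "set (replace_window j L s w) = set (replace_window j L s (window j L s))"
    using assms by (simp add: replace_window_def)
  ultimately show ?thesis using s by (simp add: replace_window_window perms_def)
qed

definition relabel :: "nat list \<Rightarrow> nat list \<Rightarrow> nat list" where
  "relabel s q = map (\<lambda>k. s ! (k - 1)) q"

lemma relabel_sort_st: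
  assumes "distinct w"
  shows "relabel (sort w) (st w) = w"
proof (rule nth_equalityI)
  fix i assume "i < length (relabel (sort w) (st w))"
  then have i: "i < length w" by (simp add: relabel_def)
  let ?s = "sort w"
  have ss: "sorted_wrt (<) ?s" and ds: "distinct ?s" using assms by (simp_all add: strict_sorted_iff)
  obtain k where k: "k < length ?s" "w ! i = ?s ! k" using i by (metis in_set_conv_nth nth_mem set_sort)
  have "(?s ! l \<le> ?s ! k) = (l \<le> k)" if "l < length ?s" for l
    using sorted_wrt_nth_less[OF ss, of l k] sorted_wrt_nth_less[OF ss, of k l] that k(1)
    by (metis le_less linorder_neqE_nat not_le)
  then have "{l. l < length ?s \<and> ?s ! l \<le> ?s ! k} = {..k}" using k(1) by auto
  then have "rank w (w ! i) = Suc k"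
    using card_filter_set_conv_nth[OF ds] k by (simp add: rank_def)
  then show "relabel (sort w) (st w) ! i = w ! i" using i k by (simp add: relabel_def nth_st)
qed (simp add: relabel_def)

lemma relabel_sorted:
  assumes ss: "sorted_wrt (<) s" and q: "q \<in> perms (length s)"
  shows "st (relabel s q) = q" and "distinct (relabel s q)"
    and "set (relabel s q) = set s" and "length (relabel s q) = length s"
proof -
  let ?L = "length s"
  have lq: "length q = ?L" and sq: "set q = {1..?L}" using q by (simp_all add: perms_length perms_def)
  have qn: "q ! i \<in> {1..?L}" if "i < ?L" for i using perms_nth[OF q that] .
  show "st (relabel s q) = q"
  proof (rule st_eqI)
    show "q \<in> perms (length (relabel s q))" using q lq by (simp add: relabel_def)
    fix i j assume "i < length (relabel s q)" "j < length (relabel s q)" "q ! i < q ! j"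
    then show "relabel s q ! i < relabel s q ! j"
      using qn[of i] qn[of j] lq sorted_wrt_nth_less[OF ss, of "q ! i - 1" "q ! j - 1"]
      by (auto simp: relabel_def)
  qed
  have "inj_on (\<lambda>k. s ! (k - 1)) {1..?L}"
    using ss by (auto simp: inj_on_def strict_sorted_iff nth_eq_iff_index_eq)
  then show "distinct (relabel s q)"
    using q sq by (simp add: relabel_def distinct_map perms_def)
  have "set s \<subseteq> (\<lambda>k. s ! (k - 1)) ` {1..?L}"
  proof
    fix x assume "x \<in> set s"
    then obtain i where "i < ?L" "x = s ! (Suc i - 1)" by (auto simp: in_set_conv_nth)
    then show "x \<in> (\<lambda>k. s ! (k - 1)) ` {1..?L}" by force
  qed
  then show "set (relabel s q) = set s" using sq by (auto simp: relabel_def)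
  show "length (relabel s q) = ?L" using lq by (simp add: relabel_def)
qed

definition sorted_window_perms :: "nat \<Rightarrow> nat \<Rightarrow> nat \<Rightarrow> nat list set" where
  "sorted_window_perms n j L = {s \<in> perms n. sorted (window j L s)}"

text \<open>Sorting the window and refilling it according to \<open>q\<close> are mutually inverse.\<close>

lemma card_window_pattern:
  assumes q: "q \<in> perms L" and jL: "j + L \<le> n"
  shows "card {s \<in> perms n. st (window j L s) = q} = card (sorted_window_perms n j L)"
proof -
  define f where "f s = replace_window j L s (sort (window j L s))" for s
  define g where "g s = replace_window j L s (relabel (window j L s) q)" for s
  have win: "distinct (window j L s)" "length (window j L s) = L"
    and refill: "\<And>w. length w = L \<Longrightarrow> window j L (replace_window j L s w) = w"
    and refill2: "\<And>w w'. length w = L \<Longrightarrow>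
        replace_window j L (replace_window j L s w) w' = replace_window j L s w'"
    if s: "s \<in> perms n" for s
    using window_of_perm[OF s jL] perms_length[OF s] jL
    by (simp_all add: window_replace_window replace_window_replace_window)
  have relabel_win: "st (relabel (window j L s) q) = q" "distinct (relabel (window j L s) q)"
      "set (relabel (window j L s) q) = set (window j L s)" "length (relabel (window j L s) q) = L"
    if s: "s \<in> sorted_window_perms n j L" for s
  proof -
    have "s \<in> perms n" using s by (simp add: sorted_window_perms_def)
    then have "sorted_wrt (<) (window j L s)" and "q \<in> perms (length (window j L s))"
      using s win q by (simp_all add: sorted_window_perms_def strict_sorted_iff)
    then show "st (relabel (window j L s) q) = q" "distinct (relabel (window j L s) q)"
      "set (relabel (window j L s) q) = set (window j L s)" "length (relabel (window j L s) q) = L"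
      using relabel_sorted win[OF \<open>s \<in> perms n\<close>] by simp_all
  qed
  have "bij_betw f {s \<in> perms n. st (window j L s) = q} (sorted_window_perms n j L)"
  proof (rule bij_betw_byWitness[where f' = g])
    show "\<forall>s\<in>{s \<in> perms n. st (window j L s) = q}. g (f s) = s"
      using win refill refill2 relabel_sort_st
      by (auto simp: f_def g_def replace_window_window)
    show "\<forall>s\<in>sorted_window_perms n j L. f (g s) = s"
    proof
      fix s assume s: "s \<in> sorted_window_perms n j L"
      then have "s \<in> perms n" by (simp add: sorted_window_perms_def)
      have "sort (relabel (window j L s) q) = window j L s"
        using relabel_win[OF s] s win[OF \<open>s \<in> perms n\<close>]
        by (intro sorted_distinct_set_unique) (auto simp: sorted_window_perms_def)
      then show "f (g s) = s"
        using relabel_win[OF s] refill refill2 \<open>s \<in> perms n\<close>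
        by (simp add: f_def g_def replace_window_window)
    qed
    show "f ` {s \<in> perms n. st (window j L s) = q} \<subseteq> sorted_window_perms n j L"
      using win refill
      by (auto simp: f_def sorted_window_perms_def intro!: replace_window_in_perms)
    show "g ` sorted_window_perms n j L \<subseteq> {s \<in> perms n. st (window j L s) = q}"
      using relabel_win refill
      by (auto simp: g_def sorted_window_perms_def intro!: replace_window_in_perms)
  qed
  then show ?thesis by (rule bij_betw_same_card)
qed

lemma card_sorted_window_perms_pos: "0 < card (sorted_window_perms n 0 n)"
proof -
  have "[1..<Suc n] \<in> perms n" by (auto simp: perms_def)
  moreover have "window 0 n [1..<Suc n] = [1..<Suc n]" by (simp add: window_def del: upt_Suc)
  ultimately have "[1..<Suc n] \<in> sorted_window_perms n 0 n"
    by (simp add: sorted_window_perms_def del: upt_Suc)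
  moreover have "finite (sorted_window_perms n 0 n)"
    using finite_perms by (simp add: sorted_window_perms_def)
  ultimately show ?thesis by (auto simp: card_gt_0_iff)
qed

definition double_occurrences :: "nat list \<Rightarrow> nat \<Rightarrow> nat list set" where
  "double_occurrences p d = {q \<in> perms (length p + d).
     st (take (length p) q) = p \<and> st (take (length p) (drop d q)) = p}"

lemma finite_double_occurrences: "finite (double_occurrences p d)"
  unfolding double_occurrences_def using finite_perms by simp

lemma Em_subset: "s \<in> perms n \<Longrightarrow> Em p s \<subseteq> {1..n + 1 - length p}"
  by (auto simp: Em_def perms_length)

lemma Em_pair_iff:
  assumes s: "s \<in> perms n" and i: "1 \<le> i" and b: "i - 1 + length p + d \<le> n"
  shows "i \<in> Em p s \<and> i + d \<in> Em p s \<longleftrightarrow>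
    st (window (i - 1) (length p + d) s) \<in> double_occurrences p d"
proof -
  let ?m = "length p" and ?w = "window (i - 1) (length p + d) s"
  have ls: "length s = n" using s by (rule perms_length)
  have "distinct ?w" "length ?w = ?m + d" using window_of_perm[OF s] b by simp_all
  then have "st ?w \<in> perms (?m + d)" by (metis st_in_perms)
  moreover have "st (take ?m (st ?w)) = st (take ?m (drop (i - 1) s))"
    by (simp add: st_take_st window_def)
  moreover have "take ?m (drop d ?w) = take ?m (drop (i + d - 1) s)"
    using i by (simp add: window_def drop_take add.commute)
  then have "st (take ?m (drop d (st ?w))) = st (take ?m (drop (i + d - 1) s))"
    by (simp add: st_take_drop_st)
  ultimately show ?thesis using i b ls unfolding Em_def double_occurrences_def by auto
qed

lemma card_Em_pair:
  assumes "1 \<le> i" and "i - 1 + length p + d \<le> n"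
  shows "card {s \<in> perms n. i \<in> Em p s \<and> i + d \<in> Em p s}
    = card (double_occurrences p d) * card (sorted_window_perms n (i - 1) (length p + d))"
proof -
  let ?j = "i - 1" and ?L = "length p + d"
  let ?occ = "\<lambda>q. {s \<in> perms n. st (window ?j ?L s) = q}"
  have "{s \<in> perms n. i \<in> Em p s \<and> i + d \<in> Em p s} = (\<Union>q\<in>double_occurrences p d. ?occ q)"
    using Em_pair_iff[OF _ assms] by auto
  then have "card {s \<in> perms n. i \<in> Em p s \<and> i + d \<in> Em p s}
      = (\<Sum>q\<in>double_occurrences p d. card (?occ q))"
    using finite_double_occurrences finite_perms by (simp only:) (rule card_UN_disjoint, auto)
  also have "\<dots> = (\<Sum>q\<in>double_occurrences p d. card (sorted_window_perms n ?j ?L))"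
    using assms by (intro sum.cong refl card_window_pattern) (auto simp: double_occurrences_def)
  finally show ?thesis by simp
qed

context
  fixes p :: "nat list" and m d :: nat
  assumes p: "p \<in> perms m" and d: "1 \<le> d" "d < m"
    and overlap: "st (drop d p) = st (take (m - d) p)"
begin

text \<open>Keys of a word with occurrences of \<open>p\<close> at positions \<open>0\<close> and \<open>d\<close>. Position \<open>a < m\<close> gets
  \<open>p ! a\<close> (scaled by \<open>m + 1\<close>); a position \<open>a \<ge> m\<close>, seen only by the second occurrence, is
  placed just above every overlap position preceding it in the second occurrence, and the
  remainder \<open>p ! (a - d) > 0\<close> keeps the keys distinct.\<close>

definition overlap_height :: "nat \<Rightarrow> nat" where
  "overlap_height x = Max (insert 0 {p ! (i + d) |i. i < m - d \<and> p ! i < x})"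

definition merge_key :: "nat \<Rightarrow> nat" where
  "merge_key a = (if a < m then p ! a * (m + 1)
     else overlap_height (p ! (a - d)) * (m + 1) + p ! (a - d))"

private lemma p_length: "length p = m"
  using p by (rule perms_length)

private lemma p_nth_bounds: "i < m \<Longrightarrow> 1 \<le> p ! i \<and> p ! i \<le> m"
  using perms_nth[OF p] by simp

lemma overlap_less:
  assumes "i < m - d" "j < m - d" "p ! i < p ! j"
  shows "p ! (d + i) < p ! (d + j)"
proof -
  have "take (m - d) p ! i < take (m - d) p ! j" using assms p_length by simp
  then have "drop d p ! i < drop d p ! j"
    using st_eq_imp_less_iff[OF overlap[symmetric]] assms p_length by simp
  then show ?thesis using assms p_length by simp
qed

lemma overlap_height_ge: "i < m - d \<Longrightarrow> p ! i < x \<Longrightarrow> p ! (i + d) \<le> overlap_height x"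
  unfolding overlap_height_def by (intro Max_ge) auto

lemma overlap_height_less:
  "(\<And>i. i < m - d \<Longrightarrow> p ! i < x \<Longrightarrow> p ! (i + d) < b) \<Longrightarrow> 0 < b \<Longrightarrow> overlap_height x < b"
  unfolding overlap_height_def by (subst Max_less_iff) auto

lemma overlap_height_mono: "x \<le> y \<Longrightarrow> overlap_height x \<le> overlap_height y"
  unfolding overlap_height_def by (intro Max_mono) auto

lemma merge_key_less_first:
  "a < m \<Longrightarrow> b < m \<Longrightarrow> p ! a < p ! b \<Longrightarrow> merge_key a < merge_key b"
  unfolding merge_key_def by (simp only: if_True mult_less_cancel2) simp

lemma merge_key_less_second:
  assumes ab: "a < m" "b < m" "p ! a < p ! b"
  shows "merge_key (d + a) < merge_key (d + b)"
proof (cases "d + a < m"; cases "d + b < m")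
  assume "d + a < m" "d + b < m"
  then show ?thesis
    using overlap_less[of a b] ab unfolding merge_key_def by (simp only: if_True mult_less_cancel2) simp
next
  assume a': "d + a < m" and b': "\<not> d + b < m"
  have "p ! (d + a) \<le> overlap_height (p ! b)"
    using overlap_height_ge[of a "p ! b"] a' ab by (simp add: add.commute)
  then have "p ! (d + a) * (m + 1) \<le> overlap_height (p ! b) * (m + 1)" by (rule mult_le_mono1)
  moreover have "1 \<le> p ! b" using p_nth_bounds ab by simp
  ultimately show ?thesis using a' b' by (simp add: merge_key_def)
next
  assume a': "\<not> d + a < m" and b': "d + b < m"
  have "overlap_height (p ! a) < p ! (d + b)"
  proof (rule overlap_height_less)
    fix i assume "i < m - d" "p ! i < p ! a"
    then show "p ! (i + d) < p ! (d + b)" using overlap_less[of i b] b' ab by (simp add: add.commute)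
  qed (use p_nth_bounds[of "d + b"] b' in simp)
  then have "Suc (overlap_height (p ! a)) * (m + 1) \<le> p ! (d + b) * (m + 1)"
    by (intro mult_le_mono1) simp
  moreover have "p ! a < (m + 1)" using p_nth_bounds[of a] ab by simp
  ultimately show ?thesis using a' b' by (simp add: merge_key_def)
next
  assume a': "\<not> d + a < m" and b': "\<not> d + b < m"
  have "overlap_height (p ! a) * (m + 1) \<le> overlap_height (p ! b) * (m + 1)"
    using overlap_height_mono[of "p ! a" "p ! b"] ab(3) by (intro mult_le_mono1) simp
  moreover have "merge_key (d + a) = overlap_height (p ! a) * (m + 1) + p ! a"
    and "merge_key (d + b) = overlap_height (p ! b) * (m + 1) + p ! b"
    using a' b' by (simp_all add: merge_key_def)
  ultimately show ?thesis using ab(3) by linarith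
qed

lemma merge_key_mod:
  assumes "a < m + d"
  shows "merge_key a mod (m + 1) = (if a < m then 0 else p ! (a - d))"
proof (cases "a < m")
  case False
  then have "a - d < m" using assms d by simp
  then have "p ! (a - d) < (m + 1)" using p_nth_bounds[of "a - d"] by simp
  then show ?thesis using False unfolding merge_key_def by (simp only: if_False mod_mult_self3) simp
next
  case True
  then show ?thesis by (simp only: merge_key_def if_True mod_mult_self2_is_0)
qed

lemma inj_on_merge_key: "inj_on merge_key {0..<m + d}"
proof (rule inj_onI)
  fix a b assume a: "a \<in> {0..<m + d}" and b: "b \<in> {0..<m + d}"
    and eq: "merge_key a = merge_key b"
  have dp: "distinct p" using p by (rule perms_distinct)
  have mod_eq: "merge_key a mod (m + 1) = merge_key b mod (m + 1)" using eq by simp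
  have pos: "0 < p ! (c - d)" if "c \<in> {0..<m + d}" for c
  proof -
    have "c - d < m" using that d by auto
    then show ?thesis using p_nth_bounds[of "c - d"] by simp
  qed
  consider "a < m" "b < m" | "\<not> a < m" "\<not> b < m" | "a < m \<longleftrightarrow> \<not> b < m" by blast
  then show "a = b"
  proof cases
    case 1
    then have "p ! a * (m + 1) = p ! b * (m + 1)" using eq by (simp add: merge_key_def)
    then have "p ! a = p ! b" by (simp only: mult_cancel2) simp
    then show ?thesis using 1 dp p_length by (simp add: nth_eq_iff_index_eq)
  next
    case 2
    then have "p ! (a - d) = p ! (b - d)" using mod_eq merge_key_mod a b by simp
    moreover have "a - d < m" "b - d < m" using a b d by auto
    ultimately have "a - d = b - d" using dp p_length by (simp add: nth_eq_iff_index_eq)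
    then show ?thesis using 2 d by simp
  next
    case 3
    then show ?thesis using mod_eq merge_key_mod a b pos[OF a] pos[OF b] by (auto split: if_splits)
  qed
qed

lemma double_occurrences_nonempty: "double_occurrences p d \<noteq> {}"
proof -
  define K where "K = map merge_key [0..<m + d]"
  have dK: "distinct K" and lK: "length K = m + d"
    using inj_on_merge_key by (simp_all add: K_def distinct_map)
  have "st (take m K) = p"
  proof (rule st_eqI)
    show "p \<in> perms (length (take m K))" using p lK by simp
  qed (use lK merge_key_less_first in \<open>simp add: K_def\<close>)
  moreover have "st (take m (drop d K)) = p"
  proof (rule st_eqI)
    show "p \<in> perms (length (take m (drop d K)))" using p lK by simp
  qed (use lK merge_key_less_second in \<open>simp add: K_def\<close>)
  moreover have "st K \<in> perms (m + d)" using st_in_perms[OF dK] lK by simp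
  ultimately have "st K \<in> double_occurrences p d"
    by (simp add: double_occurrences_def p_length st_take_st st_take_drop_st)
  then show ?thesis by blast
qed

end

lemma double_occurrence_imp_overlap:
  assumes "q \<in> double_occurrences p d" and "d < length p"
  shows "st (drop d p) = st (take (length p - d) p)"
proof -
  let ?m = "length p"
  have q1: "st (take ?m q) = p" and q2: "st (take ?m (drop d q)) = p"
    using assms(1) by (auto simp: double_occurrences_def)
  have "st (drop d p) = st (drop d (take ?m q))" using q1 st_drop_st by metis
  also have "drop d (take ?m q) = take (?m - d) (take ?m (drop d q))"
    by (simp add: drop_take min_def)
  also have "st \<dots> = st (take (?m - d) p)" using q2 st_take_st by metis
  finally show ?thesis .
qed

lemma mem_overlaps_iff_double_occurrences:
  assumes p: "p \<in> perms m" and d: "d \<in> {1..m - 1}"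
  shows "d \<in> overlaps p \<longleftrightarrow> double_occurrences p d \<noteq> {}"
  using double_occurrences_nonempty[OF p] double_occurrence_imp_overlap d perms_length[OF p]
  by (auto simp: overlaps_def)

definition ordered_pairs :: "nat set \<Rightarrow> (nat \<times> nat) set" where
  "ordered_pairs E = {(i, j) \<in> E \<times> E. i < j}"

lemma card_ordered_pairs:
  assumes "finite E"
  shows "card (ordered_pairs E) = card E choose 2"
proof -
  have "bij_betw (\<lambda>(i, j). {i, j}) (ordered_pairs E) {B. B \<subseteq> E \<and> card B = 2}"
  proof (rule bij_betw_byWitness[where f' = "\<lambda>B. (Min B, Max B)"])
    show "\<forall>x\<in>ordered_pairs E. (\<lambda>B. (Min B, Max B)) ((\<lambda>(i, j). {i, j}) x) = x"
      by (auto simp: ordered_pairs_def)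
    show "\<forall>B\<in>{B. B \<subseteq> E \<and> card B = 2}. (\<lambda>(i, j). {i, j}) (Min B, Max B) = B"
      by (auto simp: card_2_iff)
    show "(\<lambda>(i, j). {i, j}) ` ordered_pairs E \<subseteq> {B. B \<subseteq> E \<and> card B = 2}"
      by (auto simp: ordered_pairs_def)
    show "(\<lambda>B. (Min B, Max B)) ` {B. B \<subseteq> E \<and> card B = 2} \<subseteq> ordered_pairs E"
      by (auto simp: ordered_pairs_def card_2_iff)
  qed
  then show ?thesis using n_subsets[OF assms] by (simp add: bij_betw_same_card)
qed

lemma card_ordered_pairs_by_gap:
  assumes "E \<subseteq> {1..e + 1}"
  shows "card (ordered_pairs E) = (\<Sum>d\<in>{1..e}. card {i \<in> {1..e + 1 - d}. i \<in> E \<and> i + d \<in> E})"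
proof -
  have bounds: "1 \<le> i \<and> i \<le> e + 1" if "i \<in> E" for i using assms that by auto
  let ?S = "Sigma {1..e} (\<lambda>d. {i \<in> {1..e + 1 - d}. i \<in> E \<and> i + d \<in> E})"
  have "bij_betw (\<lambda>(i, j). (j - i, i)) (ordered_pairs E) ?S"
  proof (rule bij_betw_byWitness[where f' = "\<lambda>(d, i). (i, i + d)"])
    show "(\<lambda>(i, j). (j - i, i)) ` ordered_pairs E \<subseteq> ?S"
    proof
      fix x assume "x \<in> (\<lambda>(i, j). (j - i, i)) ` ordered_pairs E"
      then obtain i j where "(i, j) \<in> ordered_pairs E" "x = (j - i, i)" by auto
      then show "x \<in> ?S" using bounds[of i] bounds[of j] by (auto simp: ordered_pairs_def)
    qed
  qed (auto simp: ordered_pairs_def)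
  then have "card (ordered_pairs E) = card ?S" by (rule bij_betw_same_card)
  also have "\<dots> = (\<Sum>d\<in>{1..e}. card {i \<in> {1..e + 1 - d}. i \<in> E \<and> i + d \<in> E})"
    by (rule card_SigmaI) auto
  finally show ?thesis .
qed

lemma sum_card_filter_swap:
  assumes "finite A" "finite B"
  shows "(\<Sum>a\<in>A. card {b \<in> B. P a b}) = (\<Sum>b\<in>B. card {a \<in> A. P a b})"
  using assms by (simp add: card_eq_sum sum.inter_filter del: sum_constant) (rule sum.swap)

definition occurrence_pair_count :: "nat list \<Rightarrow> nat \<Rightarrow> nat" where
  "occurrence_pair_count p n = (\<Sum>s\<in>perms n. card (ordered_pairs (Em p s)))"

lemma occurrence_pair_count_eq_sum_a_num:
  "occurrence_pair_count p n = (\<Sum>k\<le>n + 1. (k choose 2) * a_num p n k)"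
proof -
  have fin: "finite (Em p s)" and bound: "card (Em p s) \<in> {..n + 1}" if "s \<in> perms n" for s
    using Em_subset[OF that, of p] card_mono[OF finite_atLeastAtMost Em_subset[OF that, of p]]
    by (auto intro: finite_subset)
  have "occurrence_pair_count p n = (\<Sum>s\<in>perms n. card (Em p s) choose 2)"
    unfolding occurrence_pair_count_def using fin by (simp add: card_ordered_pairs)
  also have "\<dots> = (\<Sum>k\<le>n + 1. \<Sum>s\<in>{s \<in> perms n. card (Em p s) = k}. card (Em p s) choose 2)"
    using bound by (intro sum.group[symmetric] finite_perms) auto
  also have "\<dots> = (\<Sum>k\<le>n + 1. \<Sum>s\<in>{s \<in> perms n. card (Em p s) = k}. k choose 2)"
    by (intro sum.cong refl) simp
  also have "\<dots> = (\<Sum>k\<le>n + 1. (k choose 2) * a_num p n k)"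
    by (simp only: sum_constant a_num_def of_nat_id mult.commute)
  finally show ?thesis .
qed

definition sorted_window_count :: "nat \<Rightarrow> nat \<Rightarrow> nat \<Rightarrow> nat" where
  "sorted_window_count m e d =
    (\<Sum>i\<in>{1..e + 1 - d}. card (sorted_window_perms (m + e) (i - 1) (m + d)))"

lemma sorted_window_count_pos: "0 < sorted_window_count m e e"
  using card_sorted_window_perms_pos[of "m + e"] by (simp add: sorted_window_count_def)

lemma occurrence_pair_count_by_gap:
  assumes "length p = m"
  shows "occurrence_pair_count p (m + e)
    = (\<Sum>d\<in>{1..e}. card (double_occurrences p d) * sorted_window_count m e d)"
proof -
  let ?P = "\<lambda>s d i. i \<in> Em p s \<and> i + d \<in> Em p s"
  have "Em p s \<subseteq> {1..e + 1}" if "s \<in> perms (m + e)" for s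
    using Em_subset[OF that, of p] assms by simp
  then have "occurrence_pair_count p (m + e)
      = (\<Sum>s\<in>perms (m + e). \<Sum>d\<in>{1..e}. card {i \<in> {1..e + 1 - d}. ?P s d i})"
    unfolding occurrence_pair_count_def by (intro sum.cong refl card_ordered_pairs_by_gap)
  also have "\<dots> = (\<Sum>d\<in>{1..e}. \<Sum>s\<in>perms (m + e). card {i \<in> {1..e + 1 - d}. ?P s d i})"
    by (rule sum.swap)
  also have "\<dots> = (\<Sum>d\<in>{1..e}. \<Sum>i\<in>{1..e + 1 - d}. card {s \<in> perms (m + e). ?P s d i})"
    by (simp add: sum_card_filter_swap finite_perms)
  also have "\<dots> = (\<Sum>d\<in>{1..e}. \<Sum>i\<in>{1..e + 1 - d}.
      card (double_occurrences p d) * card (sorted_window_perms (m + e) (i - 1) (m + d)))"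
  proof (intro sum.cong refl)
    fix d i assume "d \<in> {1..e}" "i \<in> {1..e + 1 - d}"
    then have i: "1 \<le> i" "i - 1 + length p + d \<le> m + e" using assms by auto
    then show "card {s \<in> perms (m + e). ?P s d i}
        = card (double_occurrences p d) * card (sorted_window_perms (m + e) (i - 1) (m + d))"
      using card_Em_pair[OF i] assms by simp
  qed
  finally show ?thesis by (simp add: sorted_window_count_def sum_distrib_left)
qed

text \<open>The coefficient of the top gap \<open>e\<close> is positive, so the number of double occurrences
  with gap \<open>e\<close> is determined by those with smaller gaps.\<close>

lemma card_double_occurrences_eq:
  assumes "length p = m" "length t = m"
    and "\<And>n. occurrence_pair_count p n = occurrence_pair_count t n"
  shows "0 < e \<Longrightarrow> card (double_occurrences p e) = card (double_occurrences t e)"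
proof (induction e rule: less_induct)
  case (less e)
  then have split: "{1..e} = insert e {1..<e}" by auto
  have "(\<Sum>d\<in>{1..e}. card (double_occurrences p d) * sorted_window_count m e d)
      = (\<Sum>d\<in>{1..e}. card (double_occurrences t d) * sorted_window_count m e d)"
    using occurrence_pair_count_by_gap assms by metis
  then have "card (double_occurrences p e) * sorted_window_count m e e
      = card (double_occurrences t e) * sorted_window_count m e e"
    unfolding split using less.IH by simp
  then show ?case using sorted_window_count_pos[of m e] by simp
qed

theorem corollary2p3:
  fixes m :: nat and p t :: "nat list"
  assumes "p \<in> perms m" and "t \<in> perms m"
    and "strongly_cwilf_equiv p t"
  shows "overlaps p = overlaps t"
proof -
  have lp: "length p = m" and lt: "length t = m" using assms(1,2) by (simp_all add: perms_length)
  have "occurrence_pair_count p n = occurrence_pair_count t n" for n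
    using assms(3) by (simp add: occurrence_pair_count_eq_sum_a_num strongly_cwilf_equiv_def)
  note card_eq = card_double_occurrences_eq[OF lp lt this]
  have "d \<in> overlaps p \<longleftrightarrow> d \<in> overlaps t" if d: "d \<in> {1..m - 1}" for d
  proof -
    have "card (double_occurrences p d) = card (double_occurrences t d)"
      using card_eq d by simp
    then have "double_occurrences p d \<noteq> {} \<longleftrightarrow> double_occurrences t d \<noteq> {}"
      using card_0_eq finite_double_occurrences by metis
    then show ?thesis
      using mem_overlaps_iff_double_occurrences[OF assms(1) d]
        mem_overlaps_iff_double_occurrences[OF assms(2) d] by simp
  qed
  moreover have "overlaps p \<subseteq> {1..m - 1}" "overlaps t \<subseteq> {1..m - 1}"
    using lp lt by (auto simp: overlaps_def)
  ultimately show ?thesis by blast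
qed

end
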